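(* Let $M$ be a finite $n$-dimensional simplicial complex, $\alpha\in H^1(M;\mathbb{Z}/2)$ nonzero, and $H\subseteq M$ a subcomplex of dimension at most $n-1$ that cuts $\alpha$. Let $x$ be a vertex of $H$ and $r\ge1$ an integer with $r<\frac{\operatorname{sys}^\alpha(M)-1}{2}$. Let $H'$ be the subcomplex consisting of $S(x,r)$ together with all simplices of $H$ not belonging to $B(x,r)$ and all their faces (i.e. $H'=(H\setminus (H\cap B(x,r)))\cup S(x,r)$). Then $H'$ cuts $\alpha$.
   Context: Distance between vertices of $M$ is the minimal number of edges in a path between them in the $1$-skeleton. For a vertex $x$ and integer $r\ge 1$, the ball $B(x,r)$ is the subcomplex consisting of all inclusion-maximal simplices of $M$ all of whose vertices are at distance at most $r$ from $x$ and at least one of whose vertices is at distance less than $r$ from $x$, together with all their faces. The sphere $S(x,r)$ is the subcomplex of all simplices of $B(x,r)$ whose vertices are all at distance exactly $r$ from $x$. For nonzero $\alpha\in H^1(M;\mathbb{Z}/2)$, $\operatorname{sys}^\alpha(M)$ is the minimal number of edges in a simplicial $1$-cycle $z$ (mod $2$) with $\alpha([z])\neq0$. A subcomplex $H$ cuts $\alpha$ if $\alpha$ restricts to zero in $H^1(|M|\setminus|H|;\mathbb{Z}/2)$, where $|M|\setminus|H|$ is the difference of geometric realizations. *)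

theory Defs
  imports "HOL-Analysis.Analysis" "HOL-Homology.Homology"
begin

definition simplicial_complex :: "nat set set \<Rightarrow> bool" where
  "simplicial_complex K \<longleftrightarrow>
     (\<forall>s\<in>K. finite s \<and> s \<noteq> {}) \<and>
     (\<forall>s\<in>K. \<forall>t. t \<subseteq> s \<and> t \<noteq> {} \<longrightarrow> t \<in> K)"

definition finite_complex_dim :: "nat set set \<Rightarrow> nat \<Rightarrow> bool" where
  "finite_complex_dim K n \<longleftrightarrow> simplicial_complex K \<and> finite K \<and>
     (\<exists>s\<in>K. card s = n + 1) \<and> (\<forall>s\<in>K. card s \<le> n + 1)"

definition subcomplex :: "nat set set \<Rightarrow> nat set set \<Rightarrow> bool" where
  "subcomplex H K \<longleftrightarrow> H \<subseteq> K \<and> simplicial_complex H"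

definition complex_dim_le :: "nat set set \<Rightarrow> nat \<Rightarrow> bool" where
  "complex_dim_le K d \<longleftrightarrow> (\<forall>s\<in>K. card s \<le> d + 1)"

text \<open>A point is a function nat \<Rightarrow> real (barycentric coordinates); it lies in |K|
  iff its support is a simplex of K, coordinates are nonnegative and sum to 1.
  The realization carries the subspace topology of the product topology, which on
  the finite-dimensional set |K| (K finite) is the Euclidean topology.\<close>

definition realization :: "nat set set \<Rightarrow> (nat \<Rightarrow> real) set" where
  "realization K = {p. {v. p v \<noteq> 0} \<in> K \<and> (\<forall>v. 0 \<le> p v) \<and> (\<Sum>v\<in>{v. p v \<noteq> 0}. p v) = 1}"

definition realization_top :: "nat set set \<Rightarrow> (nat \<Rightarrow> real) topology" where
  "realization_top K = subtopology (powertop_real UNIV) (realization K)"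

text \<open>A singular 1-cochain with Z/2 coefficients is a function from singular 1-simplices
  to bool (= Z/2); only its values on singular 1-simplices of the space matter.\<close>

definition cocycle1 :: "'a topology \<Rightarrow> (((nat \<Rightarrow> real) \<Rightarrow> 'a) \<Rightarrow> bool) \<Rightarrow> bool" where
  "cocycle1 X c \<longleftrightarrow> (\<forall>\<sigma>. singular_simplex 2 X \<sigma> \<longrightarrow>
      even (card {k\<in>{0..2::nat}. c (singular_face 2 k \<sigma>)}))"

definition coboundary1 :: "'a topology \<Rightarrow> (((nat \<Rightarrow> real) \<Rightarrow> 'a) \<Rightarrow> bool) \<Rightarrow> bool" where
  "coboundary1 X c \<longleftrightarrow> (\<exists>b :: ((nat \<Rightarrow> real) \<Rightarrow> 'a) \<Rightarrow> bool.
      \<forall>f. singular_simplex 1 X f \<longrightarrow>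
        (c f \<longleftrightarrow> b (singular_face 1 0 f) \<noteq> b (singular_face 1 1 f)))"

text \<open>The class [c] in H^1(X;Z/2) is zero iff c is a coboundary. Restriction of [c] to an
  open subset U is represented by c viewed on subtopology X U.\<close>

definition edge_simplex :: "nat \<Rightarrow> nat \<Rightarrow> (nat \<Rightarrow> real) \<Rightarrow> (nat \<Rightarrow> real)" where
  "edge_simplex u v = restrict (\<lambda>x w. (if w = u then x 0 else 0) + (if w = v then x 1 else 0))
                         (standard_simplex 1)"

definition simplicial_1cycle :: "nat set set \<Rightarrow> nat set set \<Rightarrow> bool" where
  "simplicial_1cycle K z \<longleftrightarrow> z \<subseteq> {e\<in>K. card e = 2} \<and> (\<forall>v. even (card {e\<in>z. v \<in> e}))"

text \<open>Value of the class of c on the homology class of a simplicial mod-2 1-cycle z.\<close>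
definition eval_cycle :: "(((nat \<Rightarrow> real) \<Rightarrow> (nat \<Rightarrow> real)) \<Rightarrow> bool) \<Rightarrow> nat set set \<Rightarrow> bool" where
  "eval_cycle c z \<longleftrightarrow> odd (card {e\<in>z. c (edge_simplex (Min e) (Max e))})"

definition sys_alpha :: "nat set set \<Rightarrow> (((nat \<Rightarrow> real) \<Rightarrow> (nat \<Rightarrow> real)) \<Rightarrow> bool) \<Rightarrow> nat" where
  "sys_alpha K c = Inf {card z | z. simplicial_1cycle K z \<and> eval_cycle c z}"

definition cuts :: "nat set set \<Rightarrow> nat set set \<Rightarrow> (((nat \<Rightarrow> real) \<Rightarrow> (nat \<Rightarrow> real)) \<Rightarrow> bool) \<Rightarrow> bool" where
  "cuts K H c \<longleftrightarrow>
     coboundary1 (subtopology (realization_top K) (realization K - realization H)) c"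

definition adjacent :: "nat set set \<Rightarrow> nat \<Rightarrow> nat \<Rightarrow> bool" where
  "adjacent K a b \<longleftrightarrow> a \<noteq> b \<and> {a, b} \<in> K"

definition dist_le :: "nat set set \<Rightarrow> nat \<Rightarrow> nat \<Rightarrow> nat \<Rightarrow> bool" where
  "dist_le K x y k \<longleftrightarrow> {x} \<in> K \<and> (\<exists>xs. xs \<noteq> [] \<and> hd xs = x \<and> last xs = y \<and> length xs \<le> k + 1 \<and>
      (\<forall>i. Suc i < length xs \<longrightarrow> adjacent K (xs ! i) (xs ! Suc i)))"

definition dist_eq :: "nat set set \<Rightarrow> nat \<Rightarrow> nat \<Rightarrow> nat \<Rightarrow> bool" where
  "dist_eq K x y k \<longleftrightarrow> dist_le K x y k \<and> (k = 0 \<or> \<not> dist_le K x y (k - 1))"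

definition maximal_simplex :: "nat set set \<Rightarrow> nat set \<Rightarrow> bool" where
  "maximal_simplex K s \<longleftrightarrow> s \<in> K \<and> (\<forall>t\<in>K. s \<subseteq> t \<longrightarrow> t = s)"

definition cball_sc :: "nat set set \<Rightarrow> nat \<Rightarrow> nat \<Rightarrow> nat set set" where
  "cball_sc K x r = {t. t \<noteq> {} \<and> (\<exists>s. maximal_simplex K s \<and> (\<forall>v\<in>s. dist_le K x v r) \<and>
                    (\<exists>v\<in>s. dist_le K x v (r - 1)) \<and> t \<subseteq> s)}"

definition sphere_sc :: "nat set set \<Rightarrow> nat \<Rightarrow> nat \<Rightarrow> nat set set" where
  "sphere_sc K x r = {t\<in>cball_sc K x r. \<forall>v\<in>t. dist_eq K x v r}"

definition modified_cut :: "nat set set \<Rightarrow> nat set set \<Rightarrow> nat \<Rightarrow> nat \<Rightarrow> nat set set" where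
  "modified_cut K H x r = sphere_sc K x r \<union>
      {t. t \<noteq> {} \<and> (\<exists>s\<in>H. s \<notin> cball_sc K x r \<and> t \<subseteq> s)}"

end

theory Submission
  imports Defs
begin

text \<open>
  Let b be a primitive of c off |H|. Near x the cocycle c has a second primitive: give each vertex v
  with d(x,v) \<le> r the value of c on an edge path of length \<le> r from x to v. Two such paths and an
  edge close up to a mod-2 cycle with at most 2r + 1 < sys(c) edges, on which c vanishes; so these
  values form a primitive of c on the edges of the r-ball. It extends to points p whose support lies
  in the ball by adding c on the segment from p to a support vertex, and since supports vary lower
  semicontinuously along a path, the cocycle condition on small cones shows that the extension is a
  primitive of c on paths staying in the ball. A path avoiding |H'| either meets a vertex at
  distance < r from x at each of its points, and then stays in the ball, or at none of them, and
  then avoids |H|. Gluing the two primitives accordingly gives a primitive of c off |H'|.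
\<close>

section \<open>Points and linear simplices of the realization\<close>

abbreviation product_top :: "(nat \<Rightarrow> real) topology" where
  "product_top \<equiv> powertop_real UNIV"

definition support :: "(nat \<Rightarrow> real) \<Rightarrow> nat set" where
  "support p = {v. p v \<noteq> 0}"

definition vertex_point :: "nat \<Rightarrow> nat \<Rightarrow> real" where
  "vertex_point u = (\<lambda>i. if i = u then 1 else 0)"

definition linear_path :: "('a \<Rightarrow> real) \<Rightarrow> ('a \<Rightarrow> real) \<Rightarrow> (nat \<Rightarrow> real) \<Rightarrow> 'a \<Rightarrow> real" where
  "linear_path a b = oriented_simplex 1 (\<lambda>j. if j = 0 then a else b)"

definition linear_triangle ::
    "('a \<Rightarrow> real) \<Rightarrow> ('a \<Rightarrow> real) \<Rightarrow> ('a \<Rightarrow> real) \<Rightarrow> (nat \<Rightarrow> real) \<Rightarrow> 'a \<Rightarrow> real" where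
  "linear_triangle a b d = oriented_simplex 2 (\<lambda>j. if j = 0 then a else if j = 1 then b else d)"

lemma mem_realization:
  "p \<in> realization M \<longleftrightarrow> support p \<in> M \<and> (\<forall>v. 0 \<le> p v) \<and> sum p (support p) = 1"
  by (simp add: realization_def support_def)

lemma topspace_realization_top [simp]: "topspace (realization_top M) = realization M"
  by (simp add: realization_top_def)

lemma simplicial_complex_face:
  "simplicial_complex M \<Longrightarrow> s \<in> M \<Longrightarrow> t \<subseteq> s \<Longrightarrow> t \<noteq> {} \<Longrightarrow> t \<in> M"
  unfolding simplicial_complex_def by blast

lemma support_in_complex:
  assumes "simplicial_complex M" "p \<in> realization M"
  shows "support p \<in> M" "finite (support p)" "support p \<noteq> {}"
  using assms unfolding simplicial_complex_def mem_realization by blast+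

lemma sum_realization_superset:
  assumes "p \<in> realization M" "support p \<subseteq> T" "finite T"
  shows "sum p T = 1"
proof -
  have "sum p T = sum p (support p)"
    using assms by (intro sum.mono_neutral_right) (auto simp: support_def)
  then show ?thesis
    using assms by (simp add: mem_realization)
qed

lemma support_vertex_point [simp]: "support (vertex_point u) = {u}"
  by (simp add: support_def vertex_point_def)

lemma vertex_point_in_realization: "{u} \<in> M \<Longrightarrow> vertex_point u \<in> realization M"
  by (simp add: mem_realization support_def vertex_point_def)

lemma oriented_simplex_in_realization:
  assumes SC: "simplicial_complex M" and T: "T \<in> M"
    and l: "\<And>j. j \<le> p \<Longrightarrow> l j \<in> realization M \<and> support (l j) \<subseteq> T"
    and x: "x \<in> standard_simplex p"
  shows "oriented_simplex p l x \<in> realization M"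
proof -
  define q where "q = (\<lambda>i. \<Sum>j\<le>p. l j i * x j)"
  have fT: "finite T"
    using SC T unfolding simplicial_complex_def by blast
  have x0: "\<And>j. 0 \<le> x j" and x1: "(\<Sum>j\<le>p. x j) = 1"
    using x by (auto simp: standard_simplex_def)
  have q_nonneg: "0 \<le> q i" for i
    using l x0 unfolding q_def by (intro sum_nonneg mult_nonneg_nonneg) (auto simp: mem_realization)
  have q_outside: "q i = 0" if "i \<notin> T" for i
  proof -
    have "l j i = 0" if "j \<le> p" for j
      using l[OF that] \<open>i \<notin> T\<close> by (auto simp: support_def)
    then show ?thesis
      by (simp add: q_def)
  qed
  have "sum q T = (\<Sum>j\<le>p. x j * sum (l j) T)"
    unfolding q_def by (subst sum.swap) (simp add: sum_distrib_left mult.commute)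
  also have "\<dots> = (\<Sum>j\<le>p. x j)"
  proof (rule sum.cong)
    fix j
    assume "j \<in> {..p}"
    then have "sum (l j) T = 1"
      using l[of j] fT by (intro sum_realization_superset) auto
    then show "x j * sum (l j) T = x j"
      by simp
  qed simp
  finally have sum_q: "sum q T = 1"
    using x1 by simp
  have q_T: "support q \<subseteq> T"
    using q_outside by (auto simp: support_def)
  have "support q \<noteq> {}"
  proof
    assume "support q = {}"
    then have "sum q T = 0"
      by (intro sum.neutral) (auto simp: support_def)
    with sum_q show False
      by simp
  qed
  then have "support q \<in> M"
    using simplicial_complex_face[OF SC T q_T] by blast
  moreover have "sum q (support q) = sum q T"
    using q_T fT by (intro sum.mono_neutral_left) (auto simp: support_def)
  moreover have "oriented_simplex p l x = q"
    using x by (simp add: oriented_simplex_def q_def)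
  ultimately show ?thesis
    using q_nonneg sum_q by (simp add: mem_realization)
qed

lemma singular_simplex_oriented_simplex:
  assumes "\<And>x. x \<in> standard_simplex p \<Longrightarrow> oriented_simplex p l x \<in> realization M"
  shows "singular_simplex p (realization_top M) (oriented_simplex p l)"
proof -
  have "simplicial_simplex p (realization M) (oriented_simplex p l)"
    using assms by (auto simp: simplicial_simplex)
  then show ?thesis
    by (simp add: simplicial_simplex_def realization_top_def)
qed

lemma continuous_map_oriented_simplex:
  "continuous_map (subtopology product_top (standard_simplex p)) product_top (oriented_simplex p l)"
proof -
  have "simplicial_simplex p UNIV (oriented_simplex p l)"
    by (auto simp: simplicial_simplex)
  then show ?thesis
    by (simp add: simplicial_simplex_def singular_simplex_def)
qed

lemma mem_standard_simplex_1:
  "x \<in> standard_simplex 1 \<longleftrightarrow> 0 \<le> x 0 \<and> 0 \<le> x 1 \<and> x 0 + x 1 = 1 \<and> (\<forall>i>1. x i = 0)"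
proof
  assume "0 \<le> x 0 \<and> 0 \<le> x 1 \<and> x 0 + x 1 = 1 \<and> (\<forall>i>1. x i = 0)"
  moreover from this have "0 \<le> x i \<and> x i \<le> 1" for i
    by (cases "i = 0"; cases "i = 1") auto
  ultimately show "x \<in> standard_simplex 1"
    by (simp add: standard_simplex_def)
qed (simp add: standard_simplex_def)

lemma standard_simplex_2D:
  "x \<in> standard_simplex 2 \<Longrightarrow> 0 \<le> x 0 \<and> 0 \<le> x 1 \<and> 0 \<le> x 2 \<and> x 0 + x 1 + x 2 = 1"
  by (simp add: standard_simplex_def numeral_2_eq_2)

lemma convex_comb3_bounds:
  fixes x0 x1 x2 :: real
  assumes "0 \<le> x0" "0 \<le> x1" "0 \<le> x2" "x0 + x1 + x2 = 1"
    and "lo \<le> \<alpha>" "\<alpha> \<le> hi" "lo \<le> \<beta>" "\<beta> \<le> hi" "lo \<le> \<gamma>" "\<gamma> \<le> hi"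
  shows "lo \<le> \<alpha> * x0 + \<beta> * x1 + \<gamma> * x2 \<and> \<alpha> * x0 + \<beta> * x1 + \<gamma> * x2 \<le> hi"
proof -
  have "lo * x0 \<le> \<alpha> * x0" "lo * x1 \<le> \<beta> * x1" "lo * x2 \<le> \<gamma> * x2"
       "\<alpha> * x0 \<le> hi * x0" "\<beta> * x1 \<le> hi * x1" "\<gamma> * x2 \<le> hi * x2"
    using assms by (auto intro: mult_right_mono)
  moreover have "lo * x0 + lo * x1 + lo * x2 = lo" "hi * x0 + hi * x1 + hi * x2 = hi"
    using assms(4) by (simp_all add: distrib_left[symmetric])
  ultimately show ?thesis
    by linarith
qed

lemma linear_path_apply:
  "x \<in> standard_simplex 1 \<Longrightarrow> linear_path a b x = (\<lambda>i. a i * x 0 + b i * x 1)"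
  by (simp add: linear_path_def oriented_simplex_def)

lemma linear_triangle_apply:
  "x \<in> standard_simplex 2 \<Longrightarrow> linear_triangle a b d x = (\<lambda>i. a i * x 0 + b i * x 1 + d i * x 2)"
  by (simp add: linear_triangle_def oriented_simplex_def numeral_2_eq_2)

lemma linear_triangle_faces:
  "singular_face 2 0 (linear_triangle a b d) = linear_path b d"
  "singular_face 2 1 (linear_triangle a b d) = linear_path a d"
  "singular_face 2 (Suc 0) (linear_triangle a b d) = linear_path a d"
  "singular_face 2 2 (linear_triangle a b d) = linear_path a b"
  unfolding linear_path_def linear_triangle_def
  by (subst singular_face_oriented_simplex; simp add: oriented_simplex_eq le_Suc_eq)+

lemma singular_simplex_linear_triangle:
  assumes SC: "simplicial_complex M" and T: "T \<in> M"
    and "a \<in> realization M" "support a \<subseteq> T" "b \<in> realization M" "support b \<subseteq> T"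
        "d \<in> realization M" "support d \<subseteq> T"
  shows "singular_simplex 2 (realization_top M) (linear_triangle a b d)"
  unfolding linear_triangle_def
  by (rule singular_simplex_oriented_simplex, rule oriented_simplex_in_realization[OF SC T])
     (use assms in auto)

lemma edge_simplex_eq_linear_path: "edge_simplex u w = linear_path (vertex_point u) (vertex_point w)"
proof (rule ext)
  fix x
  show "edge_simplex u w x = linear_path (vertex_point u) (vertex_point w) x"
  proof (cases "x \<in> standard_simplex 1")
    case True
    then show ?thesis
      by (simp add: edge_simplex_def) (simp add: linear_path_apply vertex_point_def fun_eq_iff)
  next
    case False
    then show ?thesis
      by (simp add: edge_simplex_def linear_path_def oriented_simplex_def)
  qed
qed

section \<open>The cocycle condition\<close>

lemma even_card_three_iff:
  "even (card {k\<in>{0..2::nat}. P k}) \<longleftrightarrow> (P 0 \<longleftrightarrow> (P 1 \<noteq> P 2))"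
proof -
  have "card {k\<in>{0..2::nat}. P k} = (\<Sum>k\<in>{0..2::nat}. if P k then 1 else 0)"
    by (simp add: sum.If_cases Int_def)
  also have "\<dots> = (if P 0 then 1 else 0) + (if P 1 then 1 else 0) + (if P 2 then 1 else (0::nat))"
    by (simp add: numeral_2_eq_2)
  finally show ?thesis
    by (cases "P 0"; cases "P 1"; cases "P 2") (simp_all only: if_True if_False; simp)+
qed

lemma cocycle1_faces:
  assumes "cocycle1 X c" "singular_simplex 2 X \<sigma>"
  shows "c (singular_face 2 0 \<sigma>) \<longleftrightarrow> (c (singular_face 2 1 \<sigma>) \<noteq> c (singular_face 2 2 \<sigma>))"
  using assms unfolding cocycle1_def even_card_three_iff by blast

lemma cocycle1_linear_triangle:
  assumes "cocycle1 X c" "singular_simplex 2 X (linear_triangle a b d)"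
  shows "c (linear_path b d) \<longleftrightarrow> (c (linear_path a d) \<noteq> c (linear_path a b))"
  using cocycle1_faces[OF assms] by (simp only: linear_triangle_faces)

lemma cocycle1_constant_path:
  assumes SC: "simplicial_complex M" and cc: "cocycle1 (realization_top M) c"
    and q: "q \<in> realization M"
  shows "\<not> c (linear_path q q)"
proof -
  have "singular_simplex 2 (realization_top M) (linear_triangle q q q)"
    using singular_simplex_linear_triangle[OF SC support_in_complex(1)[OF SC q]] q by auto
  from cocycle1_linear_triangle[OF cc this] show ?thesis
    by blast
qed

lemma cocycle1_edge_reverse:
  assumes SC: "simplicial_complex M" and cc: "cocycle1 (realization_top M) c"
    and e: "{u, w} \<in> M"
  shows "c (edge_simplex w u) \<longleftrightarrow> c (edge_simplex u w)"
proof -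
  have u: "vertex_point u \<in> realization M" and w: "vertex_point w \<in> realization M"
    using simplicial_complex_face[OF SC e] vertex_point_in_realization by auto
  then have "singular_simplex 2 (realization_top M) (linear_triangle (vertex_point u) (vertex_point w) (vertex_point u))"
    using singular_simplex_linear_triangle[OF SC e] by auto
  from cocycle1_linear_triangle[OF cc this] cocycle1_constant_path[OF SC cc u] show ?thesis
    unfolding edge_simplex_eq_linear_path by blast
qed

lemma cocycle1_edge_through_point:
  assumes SC: "simplicial_complex M" and cc: "cocycle1 (realization_top M) c"
    and p: "p \<in> realization M" and u: "u \<in> support p" and w: "w \<in> support p"
  shows "c (edge_simplex u w) \<longleftrightarrow>
           (c (linear_path p (vertex_point w)) \<noteq> c (linear_path p (vertex_point u)))"
proof -
  note T = support_in_complex(1)[OF SC p]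
  have "{u} \<in> M" "{w} \<in> M"
    using simplicial_complex_face[OF SC T] u w by auto
  then have "singular_simplex 2 (realization_top M) (linear_triangle p (vertex_point u) (vertex_point w))"
    using singular_simplex_linear_triangle[OF SC T] vertex_point_in_realization p u w by auto
  from cocycle1_linear_triangle[OF cc this] show ?thesis
    unfolding edge_simplex_eq_linear_path by blast
qed

section \<open>Subpaths of a singular 1-simplex\<close>

text \<open>
  A singular 1-simplex f is read as a path on [0,1] through the points (1-t, t) of the standard
  simplex; note that face 0 of f is then its value at t = 1.
\<close>

definition param_point :: "real \<Rightarrow> nat \<Rightarrow> real" where
  "param_point t = (\<lambda>i. if i = 0 then 1 - t else if i = 1 then t else 0)"

definition plane_point :: "real \<Rightarrow> real \<Rightarrow> nat \<Rightarrow> real" where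
  "plane_point s t = (\<lambda>i. if i = 0 then s else if i = 1 then t else 0)"

definition path_at :: "((nat \<Rightarrow> real) \<Rightarrow> 'a) \<Rightarrow> real \<Rightarrow> 'a" where
  "path_at f t = f (param_point t)"

definition mapped_path ::
    "((nat \<Rightarrow> real) \<Rightarrow> 'a) \<Rightarrow> (nat \<Rightarrow> real) \<Rightarrow> (nat \<Rightarrow> real) \<Rightarrow> (nat \<Rightarrow> real) \<Rightarrow> 'a" where
  "mapped_path \<Phi> a b = restrict (\<lambda>x. \<Phi> (linear_path a b x)) (standard_simplex 1)"

definition mapped_triangle ::
    "((nat \<Rightarrow> real) \<Rightarrow> 'a) \<Rightarrow> (nat \<Rightarrow> real) \<Rightarrow> (nat \<Rightarrow> real) \<Rightarrow> (nat \<Rightarrow> real) \<Rightarrow> (nat \<Rightarrow> real) \<Rightarrow> 'a"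
  where
  "mapped_triangle \<Phi> a b d = restrict (\<lambda>x. \<Phi> (linear_triangle a b d x)) (standard_simplex 2)"

definition subpath_simplex :: "((nat \<Rightarrow> real) \<Rightarrow> 'a) \<Rightarrow> real \<Rightarrow> real \<Rightarrow> (nat \<Rightarrow> real) \<Rightarrow> 'a" where
  "subpath_simplex f s t = mapped_path (\<lambda>y. path_at f (y 0)) (plane_point s 0) (plane_point t 0)"

lemma param_point_in_standard_simplex: "0 \<le> t \<Longrightarrow> t \<le> 1 \<Longrightarrow> param_point t \<in> standard_simplex 1"
  using mem_standard_simplex_1[of "param_point t"] by (simp add: param_point_def)

lemma param_point_inverse:
  "x \<in> standard_simplex 1 \<Longrightarrow> param_point (x 1) = x \<and> 0 \<le> x 1 \<and> x 1 \<le> 1"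
  using mem_standard_simplex_1[of x] by (auto simp: param_point_def)

lemma singular_face_1_vertex_point:
  "singular_face 1 0 f (vertex_point 0) = path_at f 1"
  "singular_face 1 1 f (vertex_point 0) = path_at f 0"
proof -
  have "vertex_point 0 \<in> standard_simplex 0"
    by (simp add: vertex_point_def)
  moreover have "simplical_face 0 (vertex_point 0) = param_point 1"
    "simplical_face 1 (vertex_point 0) = param_point 0"
    by (auto simp: simplical_face_def vertex_point_def param_point_def)
  ultimately show "singular_face 1 0 f (vertex_point 0) = path_at f 1"
    "singular_face 1 1 f (vertex_point 0) = path_at f 0"
    by (simp_all add: singular_face_def path_at_def)
qed

lemma path_at_in_realization:
  assumes f: "singular_simplex 1 (realization_top M) f" and "0 \<le> t" "t \<le> 1"
  shows "path_at f t \<in> realization M"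
proof -
  have "f ` standard_simplex 1 \<subseteq> realization M"
    using f unfolding singular_simplex_def
    by (metis continuous_map_image_subset_topspace topspace_realization_top topspace_standard_simplex)
  then show ?thesis
    using param_point_in_standard_simplex[OF assms(2,3)] by (auto simp: path_at_def)
qed

lemma continuous_on_path_at:
  assumes f: "singular_simplex 1 (realization_top M) f"
  shows "continuous_on {0..1} (\<lambda>t. path_at f t v)"
proof -
  have "continuous_on {0..1} (\<lambda>t. param_point t i)" for i
    by (cases "i = 0"; cases "i = 1") (simp_all add: param_point_def continuous_intros)
  then have "continuous_map (top_of_set {0..1}) product_top param_point"
    unfolding continuous_map_componentwise_UNIV continuous_map_iff_continuous by blast
  then have "continuous_map (top_of_set {0..1}) (subtopology product_top (standard_simplex 1)) param_point"
    using param_point_in_standard_simplex by (auto simp: continuous_map_in_subtopology)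
  then have "continuous_map (top_of_set {0..1}) (realization_top M) (f \<circ> param_point)"
    using f continuous_map_compose unfolding singular_simplex_def by blast
  then have "continuous_map (top_of_set {0..1}) product_top (f \<circ> param_point)"
    by (simp add: realization_top_def continuous_map_in_subtopology)
  then show ?thesis
    unfolding continuous_map_componentwise_UNIV continuous_map_iff_continuous
    by (simp add: path_at_def o_def)
qed

lemma support_path_at_nbhd:
  assumes f: "singular_simplex 1 (realization_top M) f" and a: "a \<in> {0..1}"
    and F: "finite F" "F \<subseteq> support (path_at f a)"
  shows "\<exists>d>0. \<forall>t\<in>{0..1}. dist a t < d \<longrightarrow> F \<subseteq> support (path_at f t)"
  using F
proof (induction F rule: finite_induct)
  case empty
  show ?case
    by (intro exI[of _ 1]) simp
next
  case (insert v F)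
  obtain d where d: "d > 0" "\<forall>t\<in>{0..1}. dist a t < d \<longrightarrow> F \<subseteq> support (path_at f t)"
    using insert.IH insert.prems by blast
  have "path_at f a v \<noteq> 0"
    using insert.prems by (simp add: support_def)
  then obtain d' where d': "d' > 0" "\<forall>t\<in>{0..1}. dist a t < d' \<longrightarrow> path_at f t v \<noteq> 0"
    using continuous_on_avoid[OF continuous_on_path_at[OF f] a, of v 0] by blast
  show ?case
  proof (intro exI[of _ "min d d'"] conjI ballI impI)
    fix t
    assume "t \<in> {0..1}" "dist a t < min d d'"
    then show "insert v F \<subseteq> support (path_at f t)"
      using d d' by (simp add: support_def)
  qed (use d d' in simp)
qed

lemma locally_constant_on_unit_interval:
  fixes P :: "real \<Rightarrow> bool"
  assumes "\<And>a. a \<in> {0..1} \<Longrightarrow> \<exists>d>0. \<forall>t\<in>{0..1}. dist a t < d \<longrightarrow> P t = P a"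
    and "s \<in> {0..1}" "t \<in> {0..1}"
  shows "P s = P t"
proof (rule connected_equivalence_relation[of "{0..1}" s t "\<lambda>s t. P s = P t"])
  fix a :: real
  assume a: "a \<in> {0..1}"
  then obtain d where d: "d > 0" "\<forall>t\<in>{0..1}. dist a t < d \<longrightarrow> P t = P a"
    using assms(1) by blast
  have "openin (top_of_set {0..1}) ({0..1} \<inter> ball a d)"
    by (simp add: openin_open_Int)
  moreover have "a \<in> {0..1} \<inter> ball a d"
    using a d(1) by simp
  moreover have "\<forall>t\<in>{0..1} \<inter> ball a d. P a = P t"
    using d(2) by simp
  ultimately show "\<exists>T. openin (top_of_set {0..1}) T \<and> a \<in> T \<and> (\<forall>t\<in>T. P a = P t)"
    by blast
qed (use assms(2,3) in auto)

lemma continuous_map_path_reparam: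
  assumes f: "singular_simplex 1 X f"
  shows "continuous_map (subtopology product_top {y. 0 \<le> y 0 \<and> y 0 \<le> 1}) X (\<lambda>y. path_at f (y 0))"
proof -
  have "continuous_map product_top euclideanreal (\<lambda>y. param_point (y 0) i)" for i
    by (auto simp: param_point_def intro!: continuous_intros continuous_map_product_projection)
  then have "continuous_map (subtopology product_top {y. 0 \<le> y 0 \<and> y 0 \<le> 1}) product_top (\<lambda>y. param_point (y 0))"
    unfolding continuous_map_componentwise_UNIV by (auto intro: continuous_map_from_subtopology)
  then have "continuous_map (subtopology product_top {y. 0 \<le> y 0 \<and> y 0 \<le> 1})
      (subtopology product_top (standard_simplex 1)) (\<lambda>y. param_point (y 0))"
    using param_point_in_standard_simplex by (auto simp: continuous_map_in_subtopology)
  moreover have "continuous_map (subtopology product_top (standard_simplex 1)) X f"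
    using f by (simp add: singular_simplex_def)
  ultimately show ?thesis
    unfolding path_at_def using continuous_map_compose[unfolded o_def] by blast
qed

lemma mapped_triangle_faces:
  "singular_face 2 0 (mapped_triangle \<Phi> a b d) = mapped_path \<Phi> b d"
  "singular_face 2 1 (mapped_triangle \<Phi> a b d) = mapped_path \<Phi> a d"
  "singular_face 2 2 (mapped_triangle \<Phi> a b d) = mapped_path \<Phi> a b"
proof -
  have *: "singular_face 2 k (mapped_triangle \<Phi> a b d)
           = restrict (\<lambda>x. \<Phi> (singular_face 2 k (linear_triangle a b d) x)) (standard_simplex 1)"
    if "k \<le> 2" for k
  proof (rule ext)
    fix x
    show "singular_face 2 k (mapped_triangle \<Phi> a b d) x
          = restrict (\<lambda>x. \<Phi> (singular_face 2 k (linear_triangle a b d) x)) (standard_simplex 1) x"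
    proof (cases "x \<in> standard_simplex 1")
      case True
      then have "simplical_face k x \<in> standard_simplex 2"
        using simplical_face_in_standard_simplex[of 2 k x] that by simp
      then show ?thesis
        using True by (simp add: singular_face_def mapped_triangle_def)
    qed (simp add: singular_face_def)
  qed
  show "singular_face 2 0 (mapped_triangle \<Phi> a b d) = mapped_path \<Phi> b d"
       "singular_face 2 1 (mapped_triangle \<Phi> a b d) = mapped_path \<Phi> a d"
       "singular_face 2 2 (mapped_triangle \<Phi> a b d) = mapped_path \<Phi> a b"
    by (simp_all add: * linear_triangle_faces mapped_path_def)
qed

lemma cocycle1_mapped_triangle:
  assumes "cocycle1 X c" "singular_simplex 2 X (mapped_triangle \<Phi> a b d)"
  shows "c (mapped_path \<Phi> b d) \<longleftrightarrow> (c (mapped_path \<Phi> a d) \<noteq> c (mapped_path \<Phi> a b))"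
  using cocycle1_faces[OF assms] by (simp only: mapped_triangle_faces)

lemma singular_simplex_mapped_triangle:
  assumes "continuous_map (subtopology product_top D) X \<Phi>"
    and "\<And>x. x \<in> standard_simplex 2 \<Longrightarrow> linear_triangle a b d x \<in> D"
  shows "singular_simplex 2 X (mapped_triangle \<Phi> a b d)"
proof -
  have "continuous_map (subtopology product_top (standard_simplex 2)) (subtopology product_top D)
          (linear_triangle a b d)"
    using continuous_map_oriented_simplex[of 2] assms(2)
    unfolding linear_triangle_def by (auto simp: continuous_map_in_subtopology)
  then have "continuous_map (subtopology product_top (standard_simplex 2)) X (\<Phi> \<circ> linear_triangle a b d)"
    using assms(1) continuous_map_compose by blast
  then have "continuous_map (subtopology product_top (standard_simplex 2)) X (mapped_triangle \<Phi> a b d)"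
    by (rule continuous_map_eq) (simp add: mapped_triangle_def)
  then show ?thesis
    by (simp add: singular_simplex_def mapped_triangle_def)
qed

lemma subpath_simplex_full:
  assumes "singular_simplex 1 X f"
  shows "subpath_simplex f 0 1 = f"
proof (rule ext)
  fix x
  show "subpath_simplex f 0 1 x = f x"
  proof (cases "x \<in> standard_simplex 1")
    case True
    then show ?thesis
      using param_point_inverse[OF True]
      by (simp add: subpath_simplex_def mapped_path_def path_at_def linear_path_apply plane_point_def)
  next
    case False
    then show ?thesis
      using assms by (simp add: subpath_simplex_def mapped_path_def singular_simplex_def extensional_def)
  qed
qed

lemma subpath_simplex_const: "subpath_simplex f a a = linear_path (path_at f a) (path_at f a)"
proof (rule ext)
  fix x
  show "subpath_simplex f a a x = linear_path (path_at f a) (path_at f a) x"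
  proof (cases "x \<in> standard_simplex 1")
    case True
    then obtain t where "x = param_point t"
      using param_point_inverse by metis
    with True show ?thesis
      by (simp add: subpath_simplex_def mapped_path_def linear_path_apply plane_point_def)
         (simp add: param_point_def algebra_simps)
  qed (simp add: subpath_simplex_def mapped_path_def linear_path_def oriented_simplex_def)
qed

lemma cocycle1_subpath_split:
  assumes cc: "cocycle1 X c" and f: "singular_simplex 1 X f"
    and "0 \<le> a" "a \<le> 1" "0 \<le> m" "m \<le> 1" "0 \<le> b" "b \<le> 1"
  shows "c (subpath_simplex f m b) \<longleftrightarrow> (c (subpath_simplex f a b) \<noteq> c (subpath_simplex f a m))"
proof -
  have "singular_simplex 2 X
          (mapped_triangle (\<lambda>y. path_at f (y 0)) (plane_point a 0) (plane_point m 0) (plane_point b 0))"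
  proof (rule singular_simplex_mapped_triangle[OF continuous_map_path_reparam[OF f]])
    fix x
    assume x: "x \<in> standard_simplex 2"
    show "linear_triangle (plane_point a 0) (plane_point m 0) (plane_point b 0) x
            \<in> {y. 0 \<le> y 0 \<and> y 0 \<le> 1}"
      using standard_simplex_2D[OF x] convex_comb3_bounds[of "x 0" "x 1" "x 2" 0 a 1 m b] assms
      by (simp add: linear_triangle_apply[OF x] plane_point_def)
  qed
  from cocycle1_mapped_triangle[OF cc this] show ?thesis
    unfolding subpath_simplex_def by blast
qed

definition cone_map :: "((nat \<Rightarrow> real) \<Rightarrow> nat \<Rightarrow> real) \<Rightarrow> nat \<Rightarrow> (nat \<Rightarrow> real) \<Rightarrow> nat \<Rightarrow> real" where
  "cone_map f w y = (\<lambda>i. (1 - y 1) * path_at f (y 0) i + y 1 * vertex_point w i)"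

lemma cone_map_in_realization:
  assumes SC: "simplicial_complex M" and f: "singular_simplex 1 (realization_top M) f"
    and y: "0 \<le> y 0" "y 0 \<le> 1" "0 \<le> y 1" "y 1 \<le> 1"
    and w: "w \<in> support (path_at f (y 0))"
  shows "cone_map f w y \<in> realization M"
proof -
  let ?p = "path_at f (y 0)"
  have p: "?p \<in> realization M"
    using path_at_in_realization[OF f y(1,2)] .
  note T = support_in_complex(1)[OF SC p]
  have "{w} \<in> M"
    using simplicial_complex_face[OF SC T] w by blast
  then have w_real: "vertex_point w \<in> realization M"
    by (rule vertex_point_in_realization)
  have x: "plane_point (1 - y 1) (y 1) \<in> standard_simplex 1"
    using y mem_standard_simplex_1[of "plane_point (1 - y 1) (y 1)"] by (simp add: plane_point_def)
  have "linear_path ?p (vertex_point w) (plane_point (1 - y 1) (y 1)) \<in> realization M"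
    unfolding linear_path_def
    by (rule oriented_simplex_in_realization[OF SC T _ x]) (use p w w_real in auto)
  moreover have "linear_path ?p (vertex_point w) (plane_point (1 - y 1) (y 1)) = cone_map f w y"
    using x by (simp add: linear_path_apply cone_map_def plane_point_def mult.commute)
  ultimately show ?thesis
    by simp
qed

lemma continuous_map_cone_map:
  assumes f: "singular_simplex 1 (realization_top M) f"
    and D: "D \<subseteq> {y. 0 \<le> y 0 \<and> y 0 \<le> 1}"
    and img: "\<And>y. y \<in> D \<Longrightarrow> cone_map f w y \<in> realization M"
  shows "continuous_map (subtopology product_top D) (realization_top M) (cone_map f w)"
proof -
  have "continuous_map (subtopology product_top D) (realization_top M) (\<lambda>y. path_at f (y 0))"
    using continuous_map_from_subtopology_mono[OF continuous_map_path_reparam[OF f] D] .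
  then have "continuous_map (subtopology product_top D) product_top (\<lambda>y. path_at f (y 0))"
    by (simp add: realization_top_def continuous_map_in_subtopology)
  then have path_i: "continuous_map (subtopology product_top D) euclideanreal (\<lambda>y. path_at f (y 0) i)" for i
    using continuous_map_compose[OF _ continuous_map_product_projection[of i UNIV]]
    by (simp add: o_def)
  have y1: "continuous_map (subtopology product_top D) euclideanreal (\<lambda>y. y 1)"
    by (intro continuous_map_from_subtopology continuous_map_product_projection) auto
  have "continuous_map (subtopology product_top D) product_top (cone_map f w)"
    unfolding continuous_map_componentwise_UNIV cone_map_def
    by (intro allI continuous_intros path_i y1)
  then show ?thesis
    using img by (auto simp: realization_top_def continuous_map_in_subtopology)
qed

lemma mapped_path_cone_map:
  "mapped_path (cone_map f w) (plane_point s 0) (plane_point t 0) = subpath_simplex f s t"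
  "mapped_path (cone_map f w) (plane_point s 0) (plane_point s 1) = linear_path (path_at f s) (vertex_point w)"
  "mapped_path (cone_map f w) (plane_point s 1) (plane_point t 1) = linear_path (vertex_point w) (vertex_point w)"
proof -
  show "mapped_path (cone_map f w) (plane_point s 0) (plane_point t 0) = subpath_simplex f s t"
    by (rule ext) (simp add: mapped_path_def subpath_simplex_def linear_path_apply cone_map_def plane_point_def)
  show "mapped_path (cone_map f w) (plane_point s 0) (plane_point s 1) = linear_path (path_at f s) (vertex_point w)"
  proof (rule ext)
    fix x :: "nat \<Rightarrow> real"
    show "mapped_path (cone_map f w) (plane_point s 0) (plane_point s 1) x = linear_path (path_at f s) (vertex_point w) x"
    proof (cases "x \<in> standard_simplex 1")
      case True
      then obtain t where "x = param_point t"
        using param_point_inverse by metis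
      with True show ?thesis
        by (simp add: mapped_path_def linear_path_apply cone_map_def plane_point_def)
           (simp add: param_point_def algebra_simps)
    qed (simp add: mapped_path_def linear_path_def oriented_simplex_def)
  qed
  show "mapped_path (cone_map f w) (plane_point s 1) (plane_point t 1) = linear_path (vertex_point w) (vertex_point w)"
  proof (rule ext)
    fix x :: "nat \<Rightarrow> real"
    show "mapped_path (cone_map f w) (plane_point s 1) (plane_point t 1) x = linear_path (vertex_point w) (vertex_point w) x"
    proof (cases "x \<in> standard_simplex 1")
      case True
      then obtain t where "x = param_point t"
        using param_point_inverse by metis
      with True show ?thesis
        by (simp add: mapped_path_def linear_path_apply cone_map_def plane_point_def)
           (simp add: param_point_def algebra_simps)
    qed (simp add: mapped_path_def linear_path_def oriented_simplex_def)
  qed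
qed

text \<open>
  The straight-line homotopy from f to the vertex w (legitimate as long as w stays in the support)
  maps the rectangle [a, b] \<times> [0, 1]; the cocycle condition on the two halves of it gives the claim.
\<close>

lemma cocycle1_subpath_cone:
  assumes SC: "simplicial_complex M" and cc: "cocycle1 (realization_top M) c"
    and f: "singular_simplex 1 (realization_top M) f"
    and ab: "0 \<le> a" "a \<le> 1" "0 \<le> b" "b \<le> 1"
    and star: "\<And>t. min a b \<le> t \<Longrightarrow> t \<le> max a b \<Longrightarrow> w \<in> support (path_at f t)"
  shows "c (subpath_simplex f a b) \<longleftrightarrow>
           (c (linear_path (path_at f a) (vertex_point w)) \<noteq> c (linear_path (path_at f b) (vertex_point w)))"
proof -
  define D where "D = {y::nat \<Rightarrow> real. min a b \<le> y 0 \<and> y 0 \<le> max a b \<and> 0 \<le> y 1 \<and> y 1 \<le> 1}"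
  have "D \<subseteq> {y. 0 \<le> y 0 \<and> y 0 \<le> 1}"
    using ab by (auto simp: D_def)
  moreover have "cone_map f w y \<in> realization M" if "y \<in> D" for y
    using that ab by (intro cone_map_in_realization[OF SC f] star) (auto simp: D_def)
  ultimately have cont: "continuous_map (subtopology product_top D) (realization_top M) (cone_map f w)"
    using continuous_map_cone_map[OF f] by blast
  have lower: "singular_simplex 2 (realization_top M)
      (mapped_triangle (cone_map f w) (plane_point a 0) (plane_point b 0) (plane_point b 1))"
  proof (rule singular_simplex_mapped_triangle[OF cont])
    fix x
    assume x: "x \<in> standard_simplex 2"
    show "linear_triangle (plane_point a 0) (plane_point b 0) (plane_point b 1) x \<in> D"
      using standard_simplex_2D[OF x] convex_comb3_bounds[of "x 0" "x 1" "x 2" "min a b" a "max a b" b b]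
      by (simp add: linear_triangle_apply[OF x] plane_point_def D_def)
  qed
  have upper: "singular_simplex 2 (realization_top M)
      (mapped_triangle (cone_map f w) (plane_point a 0) (plane_point a 1) (plane_point b 1))"
  proof (rule singular_simplex_mapped_triangle[OF cont])
    fix x
    assume x: "x \<in> standard_simplex 2"
    show "linear_triangle (plane_point a 0) (plane_point a 1) (plane_point b 1) x \<in> D"
      using standard_simplex_2D[OF x] convex_comb3_bounds[of "x 0" "x 1" "x 2" "min a b" a "max a b" a b]
      by (simp add: linear_triangle_apply[OF x] plane_point_def D_def)
  qed
  have "w \<in> support (path_at f a)"
    using star[of a] by simp
  then have "{w} \<in> M"
    using support_in_complex(1)[OF SC path_at_in_realization[OF f ab(1,2)]]
      simplicial_complex_face[OF SC] by blast
  then have "\<not> c (linear_path (vertex_point w) (vertex_point w))"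
    using cocycle1_constant_path[OF SC cc vertex_point_in_realization] by blast
  with cocycle1_mapped_triangle[OF cc lower] cocycle1_mapped_triangle[OF cc upper] show ?thesis
    unfolding mapped_path_cone_map by blast
qed

section \<open>Edge paths and short cycles\<close>

lemma dist_le_iff_walk:
  "dist_le M x y k \<longleftrightarrow> {x} \<in> M \<and> (\<exists>xs. xs \<noteq> [] \<and> hd xs = x \<and> last xs = y \<and>
     length xs \<le> k + 1 \<and> successively (adjacent M) xs)"
  by (simp add: dist_le_def successively_conv_nth)

lemma dist_le_mono:
  assumes "dist_le M x v k" "k \<le> k'"
  shows "dist_le M x v k'"
proof -
  obtain xs where "{x} \<in> M" "xs \<noteq> []" "hd xs = x" "last xs = v" "length xs \<le> k + 1"
    "successively (adjacent M) xs"
    using assms(1) unfolding dist_le_iff_walk by blast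
  then show ?thesis
    using assms(2) unfolding dist_le_iff_walk by (intro conjI exI[of _ xs]) auto
qed

lemma dist_le_step:
  assumes "dist_le M x v k" "adjacent M v v'"
  shows "dist_le M x v' (Suc k)"
proof -
  obtain xs where xs: "{x} \<in> M" "xs \<noteq> []" "hd xs = x" "last xs = v" "length xs \<le> k + 1"
    "successively (adjacent M) xs"
    using assms(1) unfolding dist_le_iff_walk by blast
  then show ?thesis
    using assms(2) unfolding dist_le_iff_walk
    by (intro conjI exI[of _ "xs @ [v']"]) (auto simp: successively_append_iff)
qed

text \<open>The mod-2 chain of a walk: an edge traversed an even number of times cancels out.\<close>

fun walk_chain :: "nat list \<Rightarrow> nat set set" where
  "walk_chain (a # b # xs) = sym_diff {{a, b}} (walk_chain (b # xs))"
| "walk_chain _ = {}"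

lemma card_sym_diff:
  assumes "finite A" "finite B"
  shows "card (sym_diff A B) + 2 * card (A \<inter> B) = card A + card B"
proof -
  have "sym_diff A B = (A \<union> B) - (A \<inter> B)"
    by blast
  then have "card (sym_diff A B) = card (A \<union> B) - card (A \<inter> B)"
    using assms card_Diff_subset[of "A \<inter> B" "A \<union> B"] by auto
  moreover have "card (A \<inter> B) \<le> card (A \<union> B)"
    using assms by (intro card_mono) auto
  ultimately show ?thesis
    using card_Un_Int[OF assms] by simp
qed

lemma card_sym_diff_le: "finite A \<Longrightarrow> finite B \<Longrightarrow> card (sym_diff A B) \<le> card A + card B"
  using card_sym_diff by fastforce

lemma odd_card_filter_sym_diff:
  assumes "finite A" "finite B"
  shows "odd (card {e\<in>sym_diff A B. P e}) \<longleftrightarrow> (odd (card {e\<in>A. P e}) \<noteq> odd (card {e\<in>B. P e}))"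
proof -
  have "{e\<in>sym_diff A B. P e} = sym_diff {e\<in>A. P e} {e\<in>B. P e}"
    by blast
  then have "card {e\<in>sym_diff A B. P e} + 2 * card ({e\<in>A. P e} \<inter> {e\<in>B. P e})
             = card {e\<in>A. P e} + card {e\<in>B. P e}"
    using card_sym_diff[of "{e\<in>A. P e}" "{e\<in>B. P e}"] assms by simp
  then show ?thesis
    by presburger
qed

lemma odd_card_filter_singleton: "odd (card {e\<in>{s}. P e}) \<longleftrightarrow> P s"
proof -
  have "{e\<in>{s}. P e} = (if P s then {s} else {})"
    by auto
  then show ?thesis
    by simp
qed

lemma eval_cycle_sym_diff:
  "finite A \<Longrightarrow> finite B \<Longrightarrow> eval_cycle c (sym_diff A B) \<longleftrightarrow> (eval_cycle c A \<noteq> eval_cycle c B)"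
  unfolding eval_cycle_def by (rule odd_card_filter_sym_diff)

lemma eval_cycle_edge:
  assumes SC: "simplicial_complex M" and cc: "cocycle1 (realization_top M) c" and e: "{u, w} \<in> M"
  shows "eval_cycle c {{u, w}} \<longleftrightarrow> c (edge_simplex u w)"
proof (cases "u \<le> w")
  case True
  then show ?thesis
    unfolding eval_cycle_def odd_card_filter_singleton by (simp add: min_def max_def)
next
  case False
  then have "eval_cycle c {{u, w}} \<longleftrightarrow> c (edge_simplex w u)"
    unfolding eval_cycle_def odd_card_filter_singleton by (simp add: min_def max_def)
  then show ?thesis
    using cocycle1_edge_reverse[OF SC cc e] by blast
qed

lemma finite_walk_chain: "finite (walk_chain xs)"
  by (induction xs rule: walk_chain.induct) auto

lemma card_walk_chain: "card (walk_chain xs) \<le> length xs - 1"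
proof (induction xs rule: walk_chain.induct)
  case (1 a b xs)
  have "card (walk_chain (a # b # xs)) \<le> 1 + card (walk_chain (b # xs))"
    using card_sym_diff_le[of "{{a, b}}" "walk_chain (b # xs)"] finite_walk_chain by simp
  then show ?case
    using "1.IH" by simp
qed auto

lemma walk_chain_edges: "successively (adjacent M) xs \<Longrightarrow> walk_chain xs \<subseteq> {e\<in>M. card e = 2}"
  by (induction xs rule: walk_chain.induct) (auto simp: adjacent_def)

lemma odd_degree_walk_chain:
  assumes "successively (adjacent M) xs" "xs \<noteq> []"
  shows "odd (card {e\<in>walk_chain xs. v \<in> e}) \<longleftrightarrow> hd xs \<noteq> last xs \<and> (v = hd xs \<or> v = last xs)"
  using assms
proof (induction xs rule: walk_chain.induct)
  case (1 a b xs)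
  obtain L where L: "last (b # xs) = L"
    by blast
  have ab: "a \<noteq> b"
    using "1.prems" by (simp add: adjacent_def)
  have "finite {{a, b}}"
    by simp
  then have "odd (card {e\<in>walk_chain (a # b # xs). v \<in> e})
      \<longleftrightarrow> ((v \<in> {a, b}) \<noteq> odd (card {e\<in>walk_chain (b # xs). v \<in> e}))"
    by (simp only: walk_chain.simps odd_card_filter_sym_diff finite_walk_chain odd_card_filter_singleton)
  also have "\<dots> \<longleftrightarrow> ((v \<in> {a, b}) \<noteq> (b \<noteq> L \<and> (v = b \<or> v = L)))"
    using "1.IH" "1.prems" L by simp
  also have "\<dots> \<longleftrightarrow> a \<noteq> L \<and> (v = a \<or> v = L)"
    using ab by blast
  finally show ?case
    using L by simp
qed auto

definition short_walk :: "nat set set \<Rightarrow> nat \<Rightarrow> nat \<Rightarrow> nat \<Rightarrow> nat list \<Rightarrow> bool" where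
  "short_walk M x r u xs \<longleftrightarrow>
     xs \<noteq> [] \<and> hd xs = x \<and> last xs = u \<and> length xs \<le> r + 1 \<and> successively (adjacent M) xs"

lemma short_walk_exists: "dist_le M x u r \<Longrightarrow> \<exists>xs. short_walk M x r u xs"
  unfolding dist_le_iff_walk short_walk_def by blast

lemma short_walks_edge_cycle:
  assumes Wu: "short_walk M x r u Wu" and Ww: "short_walk M x r w Ww"
    and e: "{u, w} \<in> M" "u \<noteq> w"
  defines "z \<equiv> sym_diff (sym_diff (walk_chain Wu) {{u, w}}) (walk_chain Ww)"
  shows "simplicial_1cycle M z" and "card z \<le> 2 * r + 1"
proof -
  have fin: "finite (walk_chain Wu)" "finite (walk_chain Ww)" "finite (sym_diff (walk_chain Wu) {{u, w}})"
    "finite {{u, w}}"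
    by (simp_all add: finite_walk_chain)
  have walks: "successively (adjacent M) Wu" "Wu \<noteq> []" "hd Wu = x" "last Wu = u"
    "successively (adjacent M) Ww" "Ww \<noteq> []" "hd Ww = x" "last Ww = w"
    using Wu Ww by (simp_all add: short_walk_def)
  have "z \<subseteq> {e\<in>M. card e = 2}"
    using walk_chain_edges[OF walks(1)] walk_chain_edges[OF walks(5)] e by (auto simp: z_def)
  moreover have "even (card {e\<in>z. v \<in> e})" for v
  proof -
    have "odd (card {e\<in>z. v \<in> e}) \<longleftrightarrow>
        ((odd (card {e\<in>walk_chain Wu. v \<in> e}) \<noteq> (v \<in> {u, w})) \<noteq> odd (card {e\<in>walk_chain Ww. v \<in> e}))"
      unfolding z_def by (simp only: odd_card_filter_sym_diff fin odd_card_filter_singleton)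
    also have "\<dots> \<longleftrightarrow> (((x \<noteq> u \<and> (v = x \<or> v = u)) \<noteq> (v \<in> {u, w})) \<noteq> (x \<noteq> w \<and> (v = x \<or> v = w)))"
      using odd_degree_walk_chain[OF walks(1,2), of v] odd_degree_walk_chain[OF walks(5,6), of v]
      unfolding walks(3,4,7,8) by (simp only:)
    also have "\<dots> \<longleftrightarrow> False"
      using e(2) by blast
    finally show ?thesis
      by simp
  qed
  ultimately show "simplicial_1cycle M z"
    by (simp add: simplicial_1cycle_def)
  have "card z \<le> card (walk_chain Wu) + 1 + card (walk_chain Ww)"
    unfolding z_def using card_sym_diff_le[OF fin(3,2)] card_sym_diff_le[OF fin(1,4)] by simp
  also have "\<dots> \<le> 2 * r + 1"
    using card_walk_chain[of Wu] card_walk_chain[of Ww] Wu Ww unfolding short_walk_def by linarith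
  finally show "card z \<le> 2 * r + 1" .
qed

lemma not_eval_cycle_below_systole:
  assumes "simplicial_1cycle M z" "card z < sys_alpha M c"
  shows "\<not> eval_cycle c z"
proof
  assume "eval_cycle c z"
  have "sys_alpha M c \<le> card z"
    unfolding sys_alpha_def by (rule cInf_lower) (use assms \<open>eval_cycle c z\<close> in auto)
  with assms(2) show False
    by simp
qed

section \<open>A primitive on the ball\<close>

definition vertex_potential ::
    "nat set set \<Rightarrow> (((nat \<Rightarrow> real) \<Rightarrow> nat \<Rightarrow> real) \<Rightarrow> bool) \<Rightarrow> nat \<Rightarrow> nat \<Rightarrow> nat \<Rightarrow> bool" where
  "vertex_potential M c x r u = eval_cycle c (walk_chain (SOME xs. short_walk M x r u xs))"

text \<open>Min only picks some support vertex; by the next lemmas the choice does not matter.\<close>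

definition point_potential ::
    "nat set set \<Rightarrow> (((nat \<Rightarrow> real) \<Rightarrow> nat \<Rightarrow> real) \<Rightarrow> bool) \<Rightarrow> nat \<Rightarrow> nat \<Rightarrow> (nat \<Rightarrow> real) \<Rightarrow> bool" where
  "point_potential M c x r p \<longleftrightarrow>
     (vertex_potential M c x r (Min (support p)) \<noteq> c (linear_path p (vertex_point (Min (support p)))))"

lemma vertex_potential_edge:
  assumes SC: "simplicial_complex M" and cc: "cocycle1 (realization_top M) c"
    and sys: "2 * r + 1 < sys_alpha M c"
    and "dist_le M x u r" "dist_le M x w r" and e: "{u, w} \<in> M" "u \<noteq> w"
  shows "c (edge_simplex u w) \<longleftrightarrow> (vertex_potential M c x r u \<noteq> vertex_potential M c x r w)"
proof -
  define Wu where "Wu = (SOME xs. short_walk M x r u xs)"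
  define Ww where "Ww = (SOME xs. short_walk M x r w xs)"
  have walks: "short_walk M x r u Wu" "short_walk M x r w Ww"
    unfolding Wu_def Ww_def using short_walk_exists[OF assms(4)] short_walk_exists[OF assms(5)]
    by (meson someI_ex)+
  define z where "z = sym_diff (sym_diff (walk_chain Wu) {{u, w}}) (walk_chain Ww)"
  have "\<not> eval_cycle c z"
    using short_walks_edge_cycle[OF walks e] sys unfolding z_def
    by (intro not_eval_cycle_below_systole) auto
  moreover have "finite (walk_chain Wu)" "finite {{u, w}}" "finite (walk_chain Ww)"
    "finite (sym_diff (walk_chain Wu) {{u, w}})"
    by (simp_all add: finite_walk_chain)
  then have "eval_cycle c z \<longleftrightarrow>
      ((eval_cycle c (walk_chain Wu) \<noteq> eval_cycle c {{u, w}}) \<noteq> eval_cycle c (walk_chain Ww))"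
    unfolding z_def by (simp only: eval_cycle_sym_diff)
  moreover have "vertex_potential M c x r u = eval_cycle c (walk_chain Wu)"
    "vertex_potential M c x r w = eval_cycle c (walk_chain Ww)"
    by (simp_all add: vertex_potential_def Wu_def Ww_def)
  ultimately show ?thesis
    using eval_cycle_edge[OF SC cc e(1)] by blast
qed

lemma cocycle1_segment_to_vertex:
  assumes SC: "simplicial_complex M" and cc: "cocycle1 (realization_top M) c"
    and sys: "2 * r + 1 < sys_alpha M c"
    and p: "p \<in> realization M" and ball: "\<forall>v\<in>support p. dist_le M x v r" and w: "w \<in> support p"
  shows "c (linear_path p (vertex_point w)) \<longleftrightarrow> (point_potential M c x r p \<noteq> vertex_potential M c x r w)"
proof -
  define u where "u = Min (support p)"
  have u: "u \<in> support p"
    using support_in_complex[OF SC p] u_def by simp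
  show ?thesis
  proof (cases "u = w")
    case False
    have "{u, w} \<in> M"
      using simplicial_complex_face[OF SC support_in_complex(1)[OF SC p]] u w by auto
    then have "c (edge_simplex u w) \<longleftrightarrow> (vertex_potential M c x r u \<noteq> vertex_potential M c x r w)"
      using vertex_potential_edge[OF SC cc sys] ball u w False by blast
    then show ?thesis
      using cocycle1_edge_through_point[OF SC cc p u w] by (auto simp: point_potential_def u_def)
  qed (auto simp: point_potential_def u_def)
qed

lemma cocycle1_subpath_potential:
  assumes SC: "simplicial_complex M" and cc: "cocycle1 (realization_top M) c"
    and sys: "2 * r + 1 < sys_alpha M c"
    and f: "singular_simplex 1 (realization_top M) f"
    and ball: "\<forall>t\<in>{0..1}. \<forall>v\<in>support (path_at f t). dist_le M x v r"
    and ab: "a \<in> {0..1}" "b \<in> {0..1}"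
    and star: "\<And>s. min a b \<le> s \<Longrightarrow> s \<le> max a b \<Longrightarrow> w \<in> support (path_at f s)"
  shows "c (subpath_simplex f a b) \<longleftrightarrow>
           (point_potential M c x r (path_at f a) \<noteq> point_potential M c x r (path_at f b))"
proof -
  have "c (linear_path (path_at f s) (vertex_point w)) \<longleftrightarrow>
      (point_potential M c x r (path_at f s) \<noteq> vertex_potential M c x r w)" if "s \<in> {a, b}" for s
  proof (rule cocycle1_segment_to_vertex[OF SC cc sys path_at_in_realization[OF f]])
    show "0 \<le> s" "s \<le> 1" "\<forall>v\<in>support (path_at f s). dist_le M x v r"
      using that ab ball by auto
    show "w \<in> support (path_at f s)"
      using that star[of s] by auto
  qed
  moreover have "c (subpath_simplex f a b) \<longleftrightarrow>
      (c (linear_path (path_at f a) (vertex_point w)) \<noteq> c (linear_path (path_at f b) (vertex_point w)))"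
    using ab by (intro cocycle1_subpath_cone[OF SC cc f] star) auto
  ultimately show ?thesis
    by auto
qed

lemma cocycle1_path_in_ball:
  assumes SC: "simplicial_complex M" and cc: "cocycle1 (realization_top M) c"
    and sys: "2 * r + 1 < sys_alpha M c"
    and f: "singular_simplex 1 (realization_top M) f"
    and ball: "\<forall>t\<in>{0..1}. \<forall>v\<in>support (path_at f t). dist_le M x v r"
  shows "c f \<longleftrightarrow> (point_potential M c x r (path_at f 0) \<noteq> point_potential M c x r (path_at f 1))"
proof -
  let ?P = "\<lambda>t. point_potential M c x r (path_at f t)"
  define Q where "Q t \<longleftrightarrow> (c (subpath_simplex f 0 t) \<longleftrightarrow> (?P 0 \<noteq> ?P t))" for t
  have "\<exists>d>0. \<forall>t\<in>{0..1}. dist a t < d \<longrightarrow> Q t = Q a" if a: "a \<in> {0..1}" for a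
  proof -
    obtain w where w: "w \<in> support (path_at f a)"
      using support_in_complex(3)[OF SC path_at_in_realization[OF f]] a by fastforce
    then obtain d where d: "d > 0" "\<forall>t\<in>{0..1}. dist a t < d \<longrightarrow> {w} \<subseteq> support (path_at f t)"
      using support_path_at_nbhd[OF f a, of "{w}"] by auto
    have "Q t = Q a" if t: "t \<in> {0..1}" "dist a t < d" for t
    proof -
      have "w \<in> support (path_at f s)" if "min a t \<le> s" "s \<le> max a t" for s
      proof -
        have "s \<in> {0..1}" "dist a s < d"
          using a t that by (auto simp: dist_real_def)
        then show ?thesis
          using d(2) by blast
      qed
      then have "c (subpath_simplex f a t) \<longleftrightarrow> (?P a \<noteq> ?P t)"
        by (rule cocycle1_subpath_potential[OF SC cc sys f ball a t(1)])
      moreover have "c (subpath_simplex f a t) \<longleftrightarrow> (c (subpath_simplex f 0 t) \<noteq> c (subpath_simplex f 0 a))"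
        using cocycle1_subpath_split[OF cc f, of 0 a t] a t by simp
      ultimately show "Q t = Q a"
        unfolding Q_def by blast
    qed
    with d(1) show ?thesis
      by blast
  qed
  then have "Q 0 = Q 1"
    by (rule locally_constant_on_unit_interval) auto
  moreover have "\<not> c (subpath_simplex f 0 0)"
    using cocycle1_constant_path[OF SC cc path_at_in_realization[OF f]]
    by (simp add: subpath_simplex_const)
  ultimately show ?thesis
    by (simp add: Q_def subpath_simplex_full[OF f])
qed

section \<open>Paths avoiding the modified cut\<close>

definition near_centre :: "nat set set \<Rightarrow> nat \<Rightarrow> nat \<Rightarrow> (nat \<Rightarrow> real) \<Rightarrow> bool" where
  "near_centre M x r p \<longleftrightarrow> (\<exists>v\<in>support p. dist_le M x v (r - 1))"

lemma dist_le_simplex: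
  assumes SC: "simplicial_complex M" and s: "s \<in> M" "v \<in> s" "v' \<in> s"
    and v: "dist_le M x v (r - 1)" and r: "r \<ge> 1"
  shows "dist_le M x v' r"
proof (cases "v' = v")
  case True
  then show ?thesis
    using dist_le_mono[OF v] by simp
next
  case False
  then have "adjacent M v v'"
    using simplicial_complex_face[OF SC s(1), of "{v, v'}"] s by (auto simp: adjacent_def)
  then have "dist_le M x v' (Suc (r - 1))"
    by (rule dist_le_step[OF v])
  then show ?thesis
    using r by simp
qed

lemma near_centre_within_radius:
  assumes SC: "simplicial_complex M" and p: "p \<in> realization M"
    and "near_centre M x r p" and r: "r \<ge> 1"
  shows "\<forall>v\<in>support p. dist_le M x v r"
proof -
  obtain v where v: "v \<in> support p" "dist_le M x v (r - 1)"
    using assms(3) by (auto simp: near_centre_def)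
  show ?thesis
    using dist_le_simplex[OF SC support_in_complex(1)[OF SC p] v(1) _ v(2) r] by blast
qed

lemma exists_maximal_simplex:
  assumes SC: "simplicial_complex M" and fM: "finite M" and s: "s \<in> M"
  shows "\<exists>t. maximal_simplex M t \<and> s \<subseteq> t"
proof -
  define S where "S = {t\<in>M. s \<subseteq> t}"
  have fin: "finite S" and "s \<in> S"
    using fM s by (auto simp: S_def)
  then have "Max (card ` S) \<in> card ` S"
    by (intro Max_in) auto
  then obtain t where t: "t \<in> S" "card t = Max (card ` S)"
    by auto
  have "t' = t" if "t' \<in> M" "t \<subseteq> t'" for t'
  proof -
    have "t' \<in> S"
      using t(1) that by (auto simp: S_def)
    moreover have "finite t'"
      using SC that(1) unfolding simplicial_complex_def by blast
    ultimately have t': "t' \<in> S" "finite t'" .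
    then have "card t' \<le> card t"
      using Max_ge[OF finite_imageI[OF fin] imageI[OF t'(1)]] t(2) by simp
    then show ?thesis
      using card_seteq[OF t'(2) that(2)] by simp
  qed
  then show ?thesis
    using t(1) by (auto simp: maximal_simplex_def S_def)
qed

lemma near_centre_support_in_cball:
  assumes SC: "simplicial_complex M" and fM: "finite M" and p: "p \<in> realization M"
    and near: "near_centre M x r p" and r: "r \<ge> 1"
  shows "support p \<in> cball_sc M x r"
proof -
  obtain s where s: "maximal_simplex M s" "support p \<subseteq> s"
    using exists_maximal_simplex[OF SC fM support_in_complex(1)[OF SC p]] by blast
  obtain v where v: "v \<in> support p" "dist_le M x v (r - 1)"
    using near by (auto simp: near_centre_def)
  have "\<forall>v'\<in>s. dist_le M x v' r"
    using dist_le_simplex[OF SC _ _ _ v(2) r] s v(1) by (auto simp: maximal_simplex_def)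
  then show ?thesis
    unfolding cball_sc_def
    by (intro CollectI conjI exI[of _ s]) (use s v support_in_complex(3)[OF SC p] in auto)
qed

lemma support_not_in_cball:
  assumes "\<not> near_centre M x r p" and r: "r \<ge> 1" and cut: "support p \<notin> modified_cut M H x r"
  shows "support p \<notin> cball_sc M x r"
proof
  assume cb: "support p \<in> cball_sc M x r"
  then obtain v where v: "v \<in> support p" "\<not> dist_eq M x v r"
    using cut by (auto simp: modified_cut_def sphere_sc_def)
  have "dist_le M x v r"
    using cb v(1) unfolding cball_sc_def by blast
  then have "dist_le M x v (r - 1)"
    using v(2) r by (simp add: dist_eq_def)
  then show False
    using assms(1) v(1) by (auto simp: near_centre_def)
qed

lemma support_not_in_cut:
  assumes SC: "simplicial_complex M" and p: "p \<in> realization M"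
    and "\<not> near_centre M x r p" and r: "r \<ge> 1" and cut: "support p \<notin> modified_cut M H x r"
  shows "support p \<notin> H"
  using support_not_in_cball[OF assms(3-5)] support_in_complex(3)[OF SC p] cut
  by (auto simp: modified_cut_def)

lemma near_centre_path_locally_constant:
  assumes SC: "simplicial_complex M" and fM: "finite M" and r: "r \<ge> 1"
    and f: "singular_simplex 1 (realization_top M) f"
    and cut: "support (path_at f a) \<notin> modified_cut M H x r" and a: "a \<in> {0..1}"
  shows "\<exists>d>0. \<forall>t\<in>{0..1}. dist a t < d \<longrightarrow>
           near_centre M x r (path_at f t) = near_centre M x r (path_at f a)"
proof -
  have pa: "path_at f a \<in> realization M"
    using path_at_in_realization[OF f] a by simp
  show ?thesis
  proof (cases "near_centre M x r (path_at f a)")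
    case True
    then obtain v where v: "v \<in> support (path_at f a)" "dist_le M x v (r - 1)"
      by (auto simp: near_centre_def)
    then obtain d where "d > 0" "\<forall>t\<in>{0..1}. dist a t < d \<longrightarrow> {v} \<subseteq> support (path_at f t)"
      using support_path_at_nbhd[OF f a, of "{v}"] by auto
    then show ?thesis
      using True v(2) by (auto simp: near_centre_def)
  next
    case False
    obtain d where d: "d > 0"
      "\<forall>t\<in>{0..1}. dist a t < d \<longrightarrow> support (path_at f a) \<subseteq> support (path_at f t)"
      using support_path_at_nbhd[OF f a support_in_complex(2)[OF SC pa]] by auto
    have "\<not> near_centre M x r (path_at f t)" if "t \<in> {0..1}" "dist a t < d" for t
    proof
      assume "near_centre M x r (path_at f t)"
      then have "support (path_at f t) \<in> cball_sc M x r"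
        using near_centre_support_in_cball[OF SC fM path_at_in_realization[OF f] _ r] that by auto
      then have "support (path_at f a) \<in> cball_sc M x r"
        using d(2) that support_in_complex(3)[OF SC pa] unfolding cball_sc_def by blast
      then show False
        using support_not_in_cball[OF False r cut] by blast
    qed
    then show ?thesis
      using False d(1) by blast
  qed
qed

lemma path_near_centre_dichotomy:
  assumes SC: "simplicial_complex M" and fM: "finite M" and r: "r \<ge> 1"
    and f: "singular_simplex 1 (realization_top M) f"
    and cut: "\<forall>t\<in>{0..1}. support (path_at f t) \<notin> modified_cut M H x r"
  shows "(\<forall>t\<in>{0..1}. near_centre M x r (path_at f t)) \<or> (\<forall>t\<in>{0..1}. \<not> near_centre M x r (path_at f t))"
proof -
  let ?N = "\<lambda>t. near_centre M x r (path_at f t)"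
  have "\<exists>d>0. \<forall>t\<in>{0..1}. dist a t < d \<longrightarrow> ?N t = ?N a" if "a \<in> {0..1}" for a
    using near_centre_path_locally_constant[OF SC fM r f _ that] cut that by blast
  then have "?N 0 = ?N t" if "t \<in> {0..1}" for t
    using that by (intro locally_constant_on_unit_interval) auto
  then show ?thesis
    by (cases "?N 0") auto
qed

lemma path_off_complex:
  assumes "singular_simplex 1 (subtopology (realization_top M) (realization M - realization K)) f"
    and "t \<in> {0..1}"
  shows "path_at f t \<in> realization M" "support (path_at f t) \<notin> K"
proof -
  have "path_at f t \<in> realization M - realization K"
    using assms param_point_in_standard_simplex[of t]
    by (auto simp: singular_simplex_subtopology path_at_def)
  then show "path_at f t \<in> realization M" "support (path_at f t) \<notin> K"
    by (auto simp: mem_realization)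
qed

lemma path_far_from_centre_avoids_cut:
  assumes SC: "simplicial_complex M" and r: "r \<ge> 1"
    and f: "singular_simplex 1 (realization_top M) f"
    and far: "\<forall>t\<in>{0..1}. path_at f t \<in> realization M \<and> support (path_at f t) \<notin> modified_cut M H x r
                \<and> \<not> near_centre M x r (path_at f t)"
  shows "singular_simplex 1 (subtopology (realization_top M) (realization M - realization H)) f"
proof -
  have "f y \<in> realization M - realization H" if y: "y \<in> standard_simplex 1" for y
  proof -
    have t: "f y = path_at f (y 1)" "y 1 \<in> {0..1}"
      using param_point_inverse[OF y] by (simp_all add: path_at_def)
    then have "path_at f (y 1) \<in> realization M" "\<not> near_centre M x r (path_at f (y 1))"
      "support (path_at f (y 1)) \<notin> modified_cut M H x r"
      using far by blast+
    then have "support (path_at f (y 1)) \<notin> H"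
      by (rule support_not_in_cut[OF SC _ _ r])
    with \<open>path_at f (y 1) \<in> realization M\<close> show ?thesis
      unfolding t(1) by (simp add: mem_realization)
  qed
  then show ?thesis
    using f by (auto simp: singular_simplex_subtopology)
qed

text \<open>
  A singular 0-simplex g is determined by its value at the only point vertex_point 0 of the
  standard 0-simplex; the glued primitive uses the potential there if that point is near x.
\<close>

definition glued_potential ::
    "nat set set \<Rightarrow> (((nat \<Rightarrow> real) \<Rightarrow> nat \<Rightarrow> real) \<Rightarrow> bool) \<Rightarrow> nat \<Rightarrow> nat
      \<Rightarrow> (((nat \<Rightarrow> real) \<Rightarrow> nat \<Rightarrow> real) \<Rightarrow> bool) \<Rightarrow> ((nat \<Rightarrow> real) \<Rightarrow> nat \<Rightarrow> real) \<Rightarrow> bool" where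
  "glued_potential M c x r b g \<longleftrightarrow>
     (if near_centre M x r (g (vertex_point 0)) then point_potential M c x r (g (vertex_point 0)) else b g)"

lemma cocycle1_glued_potential:
  assumes SC: "simplicial_complex M" and fM: "finite M" and cc: "cocycle1 (realization_top M) c"
    and sys: "2 * r + 1 < sys_alpha M c" and r: "r \<ge> 1"
    and b: "\<forall>f. singular_simplex 1 (subtopology (realization_top M) (realization M - realization H)) f
              \<longrightarrow> (c f \<longleftrightarrow> b (singular_face 1 0 f) \<noteq> b (singular_face 1 1 f))"
    and f': "singular_simplex 1
               (subtopology (realization_top M) (realization M - realization (modified_cut M H x r))) f"
  shows "c f \<longleftrightarrow>
           (glued_potential M c x r b (singular_face 1 0 f) \<noteq> glued_potential M c x r b (singular_face 1 1 f))"
proof -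
  have f: "singular_simplex 1 (realization_top M) f"
    using f' by (simp add: singular_simplex_subtopology)
  note points = path_off_complex[OF f']
  have off_cut: "\<forall>t\<in>{0..1}. support (path_at f t) \<notin> modified_cut M H x r"
    using points(2) by blast
  consider (near) "\<forall>t\<in>{0..1}. near_centre M x r (path_at f t)"
    | (far) "\<forall>t\<in>{0..1}. \<not> near_centre M x r (path_at f t)"
    using path_near_centre_dichotomy[OF SC fM r f off_cut] by blast
  then show ?thesis
  proof cases
    case near
    then have "\<forall>t\<in>{0..1}. \<forall>v\<in>support (path_at f t). dist_le M x v r"
      using near_centre_within_radius[OF SC points(1) _ r] by blast
    then have "c f \<longleftrightarrow> (point_potential M c x r (path_at f 0) \<noteq> point_potential M c x r (path_at f 1))"
      by (rule cocycle1_path_in_ball[OF SC cc sys f])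
    moreover have "near_centre M x r (path_at f 0)" "near_centre M x r (path_at f 1)"
      using near by simp_all
    ultimately show ?thesis
      unfolding glued_potential_def singular_face_1_vertex_point by auto
  next
    case far
    have "\<forall>t\<in>{0..1}. path_at f t \<in> realization M \<and> support (path_at f t) \<notin> modified_cut M H x r
        \<and> \<not> near_centre M x r (path_at f t)"
      using far points by blast
    then have "c f \<longleftrightarrow> (b (singular_face 1 0 f) \<noteq> b (singular_face 1 1 f))"
      using b path_far_from_centre_avoids_cut[OF SC r f] by blast
    moreover have "\<not> near_centre M x r (path_at f 0)" "\<not> near_centre M x r (path_at f 1)"
      using far by simp_all
    ultimately show ?thesis
      unfolding glued_potential_def singular_face_1_vertex_point by auto
  qed
qed

lemma cuts_modified_cut:
  assumes SC: "simplicial_complex M" and fM: "finite M" and cc: "cocycle1 (realization_top M) c"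
    and sys: "2 * r + 1 < sys_alpha M c" and r: "r \<ge> 1" and cut: "cuts M H c"
  shows "cuts M (modified_cut M H x r) c"
proof -
  obtain b :: "((nat \<Rightarrow> real) \<Rightarrow> nat \<Rightarrow> real) \<Rightarrow> bool" where
    b: "\<forall>f. singular_simplex 1 (subtopology (realization_top M) (realization M - realization H)) f
          \<longrightarrow> (c f \<longleftrightarrow> b (singular_face 1 0 f) \<noteq> b (singular_face 1 1 f))"
    using cut unfolding cuts_def coboundary1_def by blast
  show ?thesis
    unfolding cuts_def coboundary1_def
    using cocycle1_glued_potential[OF SC fM cc sys r b] by blast
qed

theorem lemma2p5:
  fixes M H :: "nat set set" and n x r :: nat
    and c :: "((nat \<Rightarrow> real) \<Rightarrow> (nat \<Rightarrow> real)) \<Rightarrow> bool"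
  assumes "finite_complex_dim M n"
    and "cocycle1 (realization_top M) c"
    and "\<not> coboundary1 (realization_top M) c"
    and "subcomplex H M" and "\<forall>s\<in>H. card s \<le> n" (* dim H \<le> n - 1 *)
    and "cuts M H c"
    and "{x} \<in> H"
    and "r \<ge> 1" and "real r < (real (sys_alpha M c) - 1) / 2"
  shows "cuts M (modified_cut M H x r) c"
proof (rule cuts_modified_cut)
  show "simplicial_complex M" "finite M"
    using assms(1) by (simp_all add: finite_complex_dim_def)
  have "real (2 * r + 1) < real (sys_alpha M c)"
    using assms(9) by (simp add: field_simps)
  then show "2 * r + 1 < sys_alpha M c"
    by (simp only: of_nat_less_iff)
qed (use assms in auto)

end
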